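(* Let $0\neq h\in\mathbb{F}[x]$ and regard $A_h\subseteq A_1$ via $x\mapsto x$, $\hat y\mapsto yh$. Then the following are equivalent: (1) $h\in\mathbb{F}^*$; (2) $A_1$ is a Noetherian right $A_h$-module; (3) $A_1$ is a free right $A_h$-module. The same equivalence holds with "right" replaced by "left" in (2) and (3).
   Context: $\mathbb{F}$ is an arbitrary field. For $h\in\mathbb{F}[x]$, $A_h$ is the unital associative $\mathbb{F}$-algebra generated by $x,\hat y$ with defining relation $\hat yx-x\hat y=h$. $A_1$ is the Weyl algebra, generated by $x,y$ with $yx-xy=1$; for $h\neq 0$, $x\mapsto x,\ \hat y\mapsto yh$ embeds $A_h$ into $A_1$ as a subalgebra. *)

theory Defs
  imports "HOL-Computational_Algebra.Polynomial"
begin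

text \<open>Concrete model of the Weyl algebra A_1 over a field: an element
  sum_j p_j(x) y^j (normal ordering, x to the left of y) is represented as the
  polynomial in y with coefficients p_j in F[x], i.e. as an element of
  'a poly poly.  Addition is polynomial addition; multiplication uses the
  commutation rule  y^i q(x) = sum_k (i choose k) q^(k)(x) y^(i-k),
  which is equivalent to the defining relation yx - xy = 1.\<close>

definition weyl_mult :: "'a::field poly poly \<Rightarrow> 'a poly poly \<Rightarrow> 'a poly poly" where
  "weyl_mult P Q =
     (\<Sum>i\<le>degree P. \<Sum>j\<le>degree Q. \<Sum>k\<le>i.
        monom (of_nat (i choose k) * coeff P i * (pderiv ^^ k) (coeff Q j)) (i - k + j))"

definition weyl_x :: "'a::field poly poly" where
  "weyl_x = [:[:0, 1:]:]"

definition weyl_y :: "'a::field poly poly" where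
  "weyl_y = [:0, 1:]"

definition weyl_of_poly :: "'a::field poly \<Rightarrow> 'a poly poly" where
  "weyl_of_poly p = [:p:]"

text \<open>A_h, viewed as the subalgebra of A_1 generated by x and y h
  (image of the embedding x \<mapsto> x, \<hat>y \<mapsto> y h).\<close>
inductive_set weyl_sub :: "'a::field poly \<Rightarrow> 'a poly poly set" for h where
  one: "1 \<in> weyl_sub h"
| gen_x: "weyl_x \<in> weyl_sub h"
| gen_y: "weyl_mult weyl_y (weyl_of_poly h) \<in> weyl_sub h"
| add: "a \<in> weyl_sub h \<Longrightarrow> b \<in> weyl_sub h \<Longrightarrow> a + b \<in> weyl_sub h"
| smul: "a \<in> weyl_sub h \<Longrightarrow> smult [:c:] a \<in> weyl_sub h"
| mult: "a \<in> weyl_sub h \<Longrightarrow> b \<in> weyl_sub h \<Longrightarrow> weyl_mult a b \<in> weyl_sub h"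

definition right_submodule :: "'a::field poly \<Rightarrow> 'a poly poly set \<Rightarrow> bool" where
  "right_submodule h N \<longleftrightarrow> 0 \<in> N \<and> (\<forall>a\<in>N. \<forall>b\<in>N. a + b \<in> N)
     \<and> (\<forall>m\<in>N. \<forall>s\<in>weyl_sub h. weyl_mult m s \<in> N)"

definition left_submodule :: "'a::field poly \<Rightarrow> 'a poly poly set \<Rightarrow> bool" where
  "left_submodule h N \<longleftrightarrow> 0 \<in> N \<and> (\<forall>a\<in>N. \<forall>b\<in>N. a + b \<in> N)
     \<and> (\<forall>m\<in>N. \<forall>s\<in>weyl_sub h. weyl_mult s m \<in> N)"

definition noetherian_right :: "'a::field poly \<Rightarrow> bool" where
  "noetherian_right h \<longleftrightarrow>
     (\<forall>N :: nat \<Rightarrow> 'a poly poly set. (\<forall>n. right_submodule h (N n)) \<and> (\<forall>n. N n \<subseteq> N (Suc n))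
        \<longrightarrow> (\<exists>n0. \<forall>n\<ge>n0. N n = N n0))"

definition noetherian_left :: "'a::field poly \<Rightarrow> bool" where
  "noetherian_left h \<longleftrightarrow>
     (\<forall>N :: nat \<Rightarrow> 'a poly poly set. (\<forall>n. left_submodule h (N n)) \<and> (\<forall>n. N n \<subseteq> N (Suc n))
        \<longrightarrow> (\<exists>n0. \<forall>n\<ge>n0. N n = N n0))"

definition free_right :: "'a::field poly \<Rightarrow> bool" where
  "free_right h \<longleftrightarrow> (\<exists>B :: 'a poly poly set.
     (\<forall>m. \<exists>F c. finite F \<and> F \<subseteq> B \<and> (\<forall>b\<in>F. c b \<in> weyl_sub h)
              \<and> m = (\<Sum>b\<in>F. weyl_mult b (c b))) \<and>
     (\<forall>F c. finite F \<and> F \<subseteq> B \<and> (\<forall>b\<in>F. c b \<in> weyl_sub h)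
              \<and> (\<Sum>b\<in>F. weyl_mult b (c b)) = 0 \<longrightarrow> (\<forall>b\<in>F. c b = 0)))"

definition free_left :: "'a::field poly \<Rightarrow> bool" where
  "free_left h \<longleftrightarrow> (\<exists>B :: 'a poly poly set.
     (\<forall>m. \<exists>F c. finite F \<and> F \<subseteq> B \<and> (\<forall>b\<in>F. c b \<in> weyl_sub h)
              \<and> m = (\<Sum>b\<in>F. weyl_mult (c b) b)) \<and>
     (\<forall>F c. finite F \<and> F \<subseteq> B \<and> (\<forall>b\<in>F. c b \<in> weyl_sub h)
              \<and> (\<Sum>b\<in>F. weyl_mult (c b) b) = 0 \<longrightarrow> (\<forall>b\<in>F. c b = 0)))"

end

theory Submission
  imports Defs "HOL-Library.Extended_Nat"
begin

(*
  Write elements of A_1 in normal form sum_j p_j(x) y^j.  Then A_h consists exactly of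
  the elements with h^j dividing p_j: moving y past a coefficient differentiates it,
  which costs at most one factor h per power of y.

  If h is a nonzero constant, A_h = A_1, which is free on {1} and Noetherian by the
  leading-coefficient argument of Hilbert's basis theorem, leading coefficients being
  compared by their degree in x.

  If deg h > 0, the sets {sum_j p_j y^j : h^(j-n) divides p_j} form a strictly
  increasing chain of A_h-submodules, on either side.  And A_1 is not free: every b
  has the nonzero multiple b h^(deg b) in A_h, so by uniqueness of coordinates each
  basis element b is the only one occurring in the expansion of 1.  Thus 1 = b c, so
  b has y-degree 0 and lies in F[x], inside A_h; but then A_1 = A_h, which misses y.
*)

section \<open>The Weyl product as an iterated differential operator\<close>

text \<open>\<open>left_mult_y g = y g\<close>, by the commutation rule \<open>y p(x) = p(x) y + p'(x)\<close>.\<close>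
definition left_mult_y :: "'a::field poly poly \<Rightarrow> 'a poly poly" where
  "left_mult_y g = map_poly pderiv g + pCons 0 g"

lemma coeff_left_mult_y:
  "coeff (left_mult_y g) n = pderiv (coeff g n) + (case n of 0 \<Rightarrow> 0 | Suc m \<Rightarrow> coeff g m)"
  by (simp add: left_mult_y_def coeff_map_poly coeff_pCons split: nat.split)

lemma left_mult_y_add: "left_mult_y (a + b) = left_mult_y a + left_mult_y b"
  by (rule poly_eqI) (simp add: coeff_left_mult_y pderiv_add split: nat.split)

lemma left_mult_y_pow_add: "(left_mult_y ^^ i) (a + b) = (left_mult_y ^^ i) a + (left_mult_y ^^ i) b"
  by (induction i) (simp_all add: left_mult_y_add)

lemma left_mult_y_pow_0 [simp]: "(left_mult_y ^^ i) 0 = 0"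
  by (induction i) (simp_all add: left_mult_y_def)

lemma left_mult_y_pow_sum: "(left_mult_y ^^ i) (\<Sum>x\<in>A. f x) = (\<Sum>x\<in>A. (left_mult_y ^^ i) (f x))"
  by (induction A rule: infinite_finite_induct) (simp_all add: left_mult_y_pow_add)

lemma left_mult_y_smult: "left_mult_y (smult p g) = smult (pderiv p) g + smult p (left_mult_y g)"
  by (rule poly_eqI) (simp add: coeff_left_mult_y pderiv_mult algebra_simps split: nat.split)

text \<open>The coefficient of \<open>y\<^sup>n\<close> in \<open>y\<^sup>i q(x) y\<^sup>j\<close>.\<close>
definition y_pow_monom_coeff :: "nat \<Rightarrow> 'a::field poly \<Rightarrow> nat \<Rightarrow> nat \<Rightarrow> 'a poly" where
  "y_pow_monom_coeff i q j n =
     (if j \<le> n \<and> n \<le> i + j then of_nat (i choose (i + j - n)) * (pderiv ^^ (i + j - n)) q else 0)"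

lemma coeff_left_mult_y_pow_monom:
  "coeff ((left_mult_y ^^ i) (monom q j)) n = y_pow_monom_coeff i q j n"
proof (induction i arbitrary: n)
  case 0
  then show ?case by (auto simp: y_pow_monom_coeff_def coeff_monom)
next
  case (Suc i)
  have pderiv_of_nat_mult: "pderiv (of_nat c * p) = of_nat c * pderiv p" for c and p :: "'a poly"
    by (simp add: pderiv_mult pderiv_of_nat)
  have "coeff ((left_mult_y ^^ Suc i) (monom q j)) n
      = pderiv (y_pow_monom_coeff i q j n) + (case n of 0 \<Rightarrow> 0 | Suc m \<Rightarrow> y_pow_monom_coeff i q j m)"
    by (simp add: coeff_left_mult_y Suc split: nat.split)
  also have "\<dots> = y_pow_monom_coeff (Suc i) q j n"
  proof (cases n)
    case 0
    then show ?thesis by (cases j) (auto simp: y_pow_monom_coeff_def pderiv_of_nat_mult)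
  next
    case (Suc m)
    consider "n < j \<or> i + j < n" | "n = j" | "j < n \<and> n \<le> i + j" by linarith
    then show ?thesis
    proof cases
      case 1
      then show ?thesis using Suc by (auto simp: y_pow_monom_coeff_def)
    next
      case 2
      then have "i + j - m = Suc i" "i + j - n = i" using Suc by auto
      then show ?thesis using 2 Suc by (auto simp: y_pow_monom_coeff_def pderiv_of_nat_mult)
    next
      case 3
      define k where "k = i + j - n"
      have k: "i + j - m = Suc k" "Suc i + j - n = Suc k" using 3 Suc k_def by auto
      have "pderiv (y_pow_monom_coeff i q j n) = of_nat (i choose k) * (pderiv ^^ Suc k) q"
        using 3 by (simp add: y_pow_monom_coeff_def k_def pderiv_of_nat_mult)
      moreover have "y_pow_monom_coeff i q j m = of_nat (i choose Suc k) * (pderiv ^^ Suc k) q"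
        using 3 Suc k by (simp add: y_pow_monom_coeff_def)
      moreover have "y_pow_monom_coeff (Suc i) q j n = of_nat (Suc i choose Suc k) * (pderiv ^^ Suc k) q"
        using 3 k by (simp add: y_pow_monom_coeff_def)
      ultimately show ?thesis using Suc by (simp add: algebra_simps)
    qed
  qed
  finally show ?case .
qed

lemma coeff_left_mult_y_pow:
  "coeff ((left_mult_y ^^ i) g) n = (\<Sum>j\<le>degree g. y_pow_monom_coeff i (coeff g j) j n)"
  by (subst (1) poly_as_sum_of_monoms[symmetric])
     (simp add: left_mult_y_pow_sum coeff_sum coeff_left_mult_y_pow_monom)

lemma coeff_weyl_mult:
  "coeff (weyl_mult f g) n = (\<Sum>i\<le>degree f. \<Sum>j\<le>degree g. \<Sum>k\<le>i.
     if i + j - k = n then of_nat (i choose k) * coeff f i * (pderiv ^^ k) (coeff g j) else 0)"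
  unfolding weyl_mult_def by (simp add: coeff_sum coeff_monom eq_commute)

lemma weyl_mult_eq_sum_y_pow:
  "weyl_mult f g = (\<Sum>i\<le>degree f. smult (coeff f i) ((left_mult_y ^^ i) g))"
proof (rule poly_eqI)
  fix n
  have collapse: "(\<Sum>k\<le>i. if i + j - k = n then c k else 0)
      = (if j \<le> n \<and> n \<le> i + j then c (i + j - n) else 0)" for i j and c :: "nat \<Rightarrow> 'a poly"
  proof -
    have "(\<Sum>k\<le>i. if i + j - k = n then c k else 0)
        = (\<Sum>k\<le>i. if k = i + j - n \<and> j \<le> n \<and> n \<le> i + j then c k else 0)"
      by (rule sum.cong) auto
    then show ?thesis by (cases "j \<le> n \<and> n \<le> i + j") (auto simp: sum.delta)
  qed
  have "coeff (weyl_mult f g) n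
      = (\<Sum>i\<le>degree f. \<Sum>j\<le>degree g. coeff f i * y_pow_monom_coeff i (coeff g j) j n)"
    unfolding coeff_weyl_mult
    by (intro sum.cong refl, subst collapse) (simp add: y_pow_monom_coeff_def algebra_simps)
  then show "coeff (weyl_mult f g) n
      = coeff (\<Sum>i\<le>degree f. smult (coeff f i) ((left_mult_y ^^ i) g)) n"
    by (simp add: coeff_sum coeff_left_mult_y_pow sum_distrib_left)
qed

lemma weyl_mult_eq_sum_y_pow_bound:
  "degree f \<le> N \<Longrightarrow> weyl_mult f g = (\<Sum>i\<le>N. smult (coeff f i) ((left_mult_y ^^ i) g))"
  unfolding weyl_mult_eq_sum_y_pow by (rule sum.mono_neutral_left) (auto simp: coeff_eq_0)

lemma weyl_mult_add_left: "weyl_mult (f1 + f2) g = weyl_mult f1 g + weyl_mult f2 g"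
proof -
  define N where "N = max (degree f1) (degree f2)"
  have "degree (f1 + f2) \<le> N" "degree f1 \<le> N" "degree f2 \<le> N"
    using degree_add_le_max[of f1 f2] N_def by auto
  then show ?thesis
    by (simp add: weyl_mult_eq_sum_y_pow_bound[of _ N] smult_add_left sum.distrib)
qed

lemma weyl_mult_add_right: "weyl_mult f (g1 + g2) = weyl_mult f g1 + weyl_mult f g2"
  by (simp add: weyl_mult_eq_sum_y_pow left_mult_y_pow_add smult_add_right sum.distrib)

lemma weyl_mult_0_left [simp]: "weyl_mult 0 g = 0"
  by (simp add: weyl_mult_eq_sum_y_pow)

lemma weyl_mult_sum_left: "weyl_mult (\<Sum>x\<in>A. f x) g = (\<Sum>x\<in>A. weyl_mult (f x) g)"
  by (induction A rule: infinite_finite_induct) (simp_all add: weyl_mult_add_left)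

lemma weyl_mult_smult_left: "weyl_mult (smult p f) g = smult p (weyl_mult f g)"
proof -
  have "smult p (\<Sum>x\<in>A. u x) = (\<Sum>x\<in>A. smult p (u x))" for A and u :: "nat \<Rightarrow> 'a poly poly"
    by (induction A rule: infinite_finite_induct) (simp_all add: smult_add_right)
  then show ?thesis
    by (simp add: weyl_mult_eq_sum_y_pow_bound[of "smult p f" "degree f"] degree_smult_le
        weyl_mult_eq_sum_y_pow)
qed

lemma weyl_mult_const_left: "weyl_mult [:p:] g = smult p g"
  by (simp add: weyl_mult_eq_sum_y_pow)

lemma weyl_mult_left_mult_y: "weyl_mult (left_mult_y g) u = left_mult_y (weyl_mult g u)"
proof -
  define N where "N = degree g"
  have "degree (left_mult_y g) \<le> Suc N"
    by (rule degree_le) (auto simp: N_def coeff_left_mult_y coeff_eq_0 split: nat.split)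
  then have "weyl_mult (left_mult_y g) u
      = (\<Sum>i\<le>Suc N. smult (pderiv (coeff g i)) ((left_mult_y ^^ i) u))
      + (\<Sum>i\<le>Suc N. smult (case i of 0 \<Rightarrow> 0 | Suc m \<Rightarrow> coeff g m) ((left_mult_y ^^ i) u))"
    by (simp add: weyl_mult_eq_sum_y_pow_bound coeff_left_mult_y smult_add_left sum.distrib)
  also have "(\<Sum>i\<le>Suc N. smult (pderiv (coeff g i)) ((left_mult_y ^^ i) u))
      = (\<Sum>i\<le>N. smult (pderiv (coeff g i)) ((left_mult_y ^^ i) u))"
    by (simp add: N_def coeff_eq_0)
  also have "(\<Sum>i\<le>Suc N. smult (case i of 0 \<Rightarrow> 0 | Suc m \<Rightarrow> coeff g m) ((left_mult_y ^^ i) u))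
      = (\<Sum>i\<le>N. smult (coeff g i) ((left_mult_y ^^ Suc i) u))"
    by (subst sum.atMost_Suc_shift) simp
  also have "(\<Sum>i\<le>N. smult (pderiv (coeff g i)) ((left_mult_y ^^ i) u))
      + (\<Sum>i\<le>N. smult (coeff g i) ((left_mult_y ^^ Suc i) u)) = left_mult_y (weyl_mult g u)"
    by (simp add: weyl_mult_eq_sum_y_pow N_def left_mult_y_smult sum.distrib
        left_mult_y_pow_sum[of 1, simplified])
  finally show ?thesis .
qed

lemma weyl_mult_assoc: "weyl_mult (weyl_mult f g) u = weyl_mult f (weyl_mult g u)"
proof -
  have "weyl_mult ((left_mult_y ^^ i) g) u = (left_mult_y ^^ i) (weyl_mult g u)" for i
    by (induction i) (simp_all add: weyl_mult_left_mult_y)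
  then show ?thesis
    by (simp add: weyl_mult_eq_sum_y_pow[of f] weyl_mult_sum_left weyl_mult_smult_left)
qed

lemma weyl_mult_one_left [simp]: "weyl_mult 1 g = g"
  by (simp add: weyl_mult_eq_sum_y_pow)

lemma weyl_mult_one_right [simp]: "weyl_mult f 1 = f"
proof -
  have y_pow: "(left_mult_y ^^ i) 1 = monom 1 i" for i
    by (induction i) (auto intro!: poly_eqI simp: coeff_left_mult_y coeff_monom split: nat.split)
  show ?thesis
    by (simp add: weyl_mult_eq_sum_y_pow y_pow smult_monom poly_as_sum_of_monoms)
qed

lemma degree_weyl_mult_le: "degree (weyl_mult f g) \<le> degree f + degree g"
proof -
  have "coeff ((left_mult_y ^^ i) g) n = 0" if "n > degree g + i" for i n
    using that by (induction i arbitrary: n) (auto simp: coeff_eq_0 coeff_left_mult_y split: nat.split)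
  then have "degree ((left_mult_y ^^ i) g) \<le> degree f + degree g" if "i \<le> degree f" for i
    using that by (intro degree_le) simp
  then show ?thesis
    unfolding weyl_mult_eq_sum_y_pow
    by (intro degree_sum_le) (auto intro: order.trans[OF degree_smult_le])
qed

lemma coeff_weyl_mult_top:
  "coeff (weyl_mult f g) (degree f + degree g) = lead_coeff f * lead_coeff g"
proof -
  have high: "coeff ((left_mult_y ^^ i) g) n = 0" if "n > degree g + i" for i n
    using that by (induction i arbitrary: n) (auto simp: coeff_eq_0 coeff_left_mult_y split: nat.split)
  have top: "coeff ((left_mult_y ^^ i) g) (degree g + i) = lead_coeff g" for i
    by (induction i) (simp_all add: coeff_left_mult_y high)
  have "coeff (weyl_mult f g) (degree f + degree g)
      = (\<Sum>i\<le>degree f. coeff f i * coeff ((left_mult_y ^^ i) g) (degree f + degree g))"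
    by (simp add: weyl_mult_eq_sum_y_pow coeff_sum)
  also have "\<dots> = (\<Sum>i\<le>degree f. if i = degree f then lead_coeff f * lead_coeff g else 0)"
    using top high by (intro sum.cong) (auto simp: add.commute)
  finally show ?thesis by simp
qed

section \<open>The subalgebra \<open>A\<^sub>h\<close> and its shifts\<close>

text \<open>Shifts \<open>a < 0\<close> are allowed: an element \<open>b\<close> lies in the shift by \<open>degree b\<close>
  and \<open>h\<^sup>n\<close> in the shift by \<open>-n\<close>, so their product lies in \<open>A\<^sub>h\<close>.\<close>
definition hpow_dvd_set :: "'a::field poly \<Rightarrow> int \<Rightarrow> 'a poly poly set" where
  "hpow_dvd_set h a = {f. \<forall>j. h ^ nat (int j - a) dvd coeff f j}"

lemma hpow_dvd_set_mono:
  assumes "a \<le> b"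
  shows "hpow_dvd_set h a \<subseteq> hpow_dvd_set h b"
proof -
  have "h ^ nat (int j - b) dvd h ^ nat (int j - a)" for j
    using assms by (intro le_imp_power_dvd) simp
  then show ?thesis
    unfolding hpow_dvd_set_def by (blast intro: dvd_trans)
qed

lemma hpow_dvd_set_0 [simp]: "0 \<in> hpow_dvd_set h a"
  by (simp add: hpow_dvd_set_def)

lemma hpow_dvd_set_add: "f \<in> hpow_dvd_set h a \<Longrightarrow> g \<in> hpow_dvd_set h a \<Longrightarrow> f + g \<in> hpow_dvd_set h a"
  by (simp add: hpow_dvd_set_def)

lemma hpow_dvd_set_diff: "f \<in> hpow_dvd_set h a \<Longrightarrow> g \<in> hpow_dvd_set h a \<Longrightarrow> f - g \<in> hpow_dvd_set h a"
  by (simp add: hpow_dvd_set_def)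

lemma in_hpow_dvd_set_degree: "f \<in> hpow_dvd_set h (int (degree f))"
proof -
  have "h ^ nat (int j - int (degree f)) dvd coeff f j" for j
    by (cases "j \<le> degree f") (simp_all add: coeff_eq_0)
  then show ?thesis by (simp add: hpow_dvd_set_def)
qed

lemma const_hpow_in_hpow_dvd_set: "[:h ^ n:] \<in> hpow_dvd_set h (- int n)"
  by (auto simp: hpow_dvd_set_def coeff_pCons split: nat.split)

lemma hpow_dvd_set_eq_UNIV: "degree h = 0 \<Longrightarrow> h \<noteq> 0 \<Longrightarrow> hpow_dvd_set h a = UNIV"
  unfolding hpow_dvd_set_def by (auto simp: is_unit_iff_degree is_unit_power_iff intro: unit_imp_dvd)

lemma monom_one_in_hpow_dvd_set_iff:
  assumes "degree h > 0"
  shows "monom 1 j \<in> hpow_dvd_set h a \<longleftrightarrow> int j \<le> a"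
proof -
  have "h \<noteq> 0" using assms by auto
  then have "\<not> is_unit h" using assms by (simp add: is_unit_iff_degree)
  then have "\<not> is_unit (h ^ k)" if "k > 0" for k
    using that by (simp add: is_unit_power_iff)
  then have "h ^ nat (int j - a) dvd 1 \<longleftrightarrow> int j \<le> a"
    by (cases "int j \<le> a") auto
  then show ?thesis by (auto simp: hpow_dvd_set_def coeff_monom)
qed

lemma pderiv_funpow_hpow_dvd:
  fixes q :: "'a::field poly"
  assumes "h ^ a dvd q"
  shows "h ^ (a - k) dvd (pderiv ^^ k) q"
  using assms
proof (induction k arbitrary: q)
  case 0
  then show ?case by simp
next
  case (Suc k)
  have "h ^ (a - k - 1) dvd pderiv ((pderiv ^^ k) q)"
  proof -
    obtain r where r: "(pderiv ^^ k) q = h ^ (a - k) * r"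
      using Suc by (auto elim: dvdE)
    have d1: "h ^ (a - k - 1) dvd pderiv (h ^ (a - k))"
      unfolding pderiv_power by (intro dvd_smult) simp
    have d2: "h ^ (a - k - 1) dvd h ^ (a - k)"
      by (simp add: le_imp_power_dvd)
    show ?thesis
      using dvd_add[OF dvd_mult2[OF d1, of r] dvd_mult2[OF d2, of "pderiv r"]]
      by (simp add: r pderiv_mult algebra_simps)
  qed
  then show ?case by simp
qed

text \<open>A \<open>y\<close> moved past a coefficient either survives or differentiates it; differentiating
  lowers the \<open>y\<close>-degree by one and the power of \<open>h\<close> dividing the coefficient by at most one.\<close>
lemma weyl_mult_hpow_dvd_set:
  assumes f: "f \<in> hpow_dvd_set h a" and g: "g \<in> hpow_dvd_set h b"
  shows "weyl_mult f g \<in> hpow_dvd_set h (a + b)"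
  unfolding hpow_dvd_set_def
proof (intro CollectI allI)
  fix n
  show "h ^ nat (int n - (a + b)) dvd coeff (weyl_mult f g) n"
    unfolding coeff_weyl_mult
  proof (intro dvd_sum)
    fix i j k :: nat assume k: "k \<in> {..i}"
    show "h ^ nat (int n - (a + b)) dvd
        (if i + j - k = n then of_nat (i choose k) * coeff f i * (pderiv ^^ k) (coeff g j) else 0)"
    proof (cases "i + j - k = n")
      case True
      have "h ^ nat (int i - a) dvd coeff f i"
        using f by (simp add: hpow_dvd_set_def)
      moreover have "h ^ (nat (int j - b) - k) dvd (pderiv ^^ k) (coeff g j)"
        using g by (intro pderiv_funpow_hpow_dvd) (simp add: hpow_dvd_set_def)
      ultimately have "h ^ (nat (int i - a) + (nat (int j - b) - k)) dvd coeff f i * (pderiv ^^ k) (coeff g j)"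
        by (simp add: power_add mult_dvd_mono)
      moreover have "nat (int n - (a + b)) \<le> nat (int i - a) + (nat (int j - b) - k)"
        using True k by simp
      ultimately have "h ^ nat (int n - (a + b)) dvd coeff f i * (pderiv ^^ k) (coeff g j)"
        by (meson dvd_trans le_imp_power_dvd)
      then show ?thesis
        using True by (simp add: dvd_mult mult.assoc)
    qed simp
  qed
qed

lemma weyl_y_h_eq: "weyl_mult weyl_y (weyl_of_poly h) = [:pderiv h, h:]"
  by (rule poly_eqI) (simp add: coeff_weyl_mult weyl_y_def weyl_of_poly_def coeff_pCons split: nat.split)

lemma weyl_sub_subset_hpow_dvd_set: "weyl_sub h \<subseteq> hpow_dvd_set h 0"
proof
  fix f assume "f \<in> weyl_sub h"
  then show "f \<in> hpow_dvd_set h 0"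
  proof (induction rule: weyl_sub.induct)
    case (mult a b)
    then show ?case using weyl_mult_hpow_dvd_set[of a h 0 b 0] by simp
  qed (auto simp: hpow_dvd_set_def weyl_x_def weyl_y_h_eq coeff_1 coeff_pCons dvd_smult
      split: nat.split)
qed

lemma weyl_sub_0 [simp]: "0 \<in> weyl_sub h"
  using weyl_sub.smul[OF weyl_sub.one, where c = 0] by simp

lemma weyl_sub_const [simp]: "[:q:] \<in> weyl_sub h"
proof (induction q)
  case (pCons a q)
  have "weyl_mult weyl_x [:q:] = [:pCons 0 q:]"
    by (simp add: weyl_x_def weyl_mult_const_left)
  then have "[:pCons 0 q:] \<in> weyl_sub h"
    using weyl_sub.mult[OF weyl_sub.gen_x pCons.IH] by simp
  have "[:[:a:]:] \<in> weyl_sub h"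
    using weyl_sub.smul[OF weyl_sub.one, where c = a] by (simp add: one_pCons)
  have "[:[:a:]:] + [:pCons 0 q:] = [:pCons a q:]"
    by simp
  then show ?case
    using weyl_sub.add[OF \<open>[:[:a:]:] \<in> weyl_sub h\<close> \<open>[:pCons 0 q:] \<in> weyl_sub h\<close>] by simp
qed simp

lemma weyl_sub_diff:
  assumes "a \<in> weyl_sub h" "b \<in> weyl_sub h"
  shows "a - b \<in> weyl_sub h"
proof -
  have "smult [:-1:] b = - b"
    by (rule poly_eqI) simp
  then show ?thesis
    using weyl_sub.add[OF assms(1) weyl_sub.smul[OF assms(2), of "-1"]] by simp
qed

lemma weyl_sub_sum: "(\<And>x. x \<in> A \<Longrightarrow> f x \<in> weyl_sub h) \<Longrightarrow> (\<Sum>x\<in>A. f x) \<in> weyl_sub h"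
  by (induction A rule: infinite_finite_induct) (simp_all add: weyl_sub.add)

definition yh_pow :: "'a::field poly \<Rightarrow> nat \<Rightarrow> 'a poly poly" where
  "yh_pow h n = (weyl_mult (weyl_mult weyl_y (weyl_of_poly h)) ^^ n) 1"

lemma yh_pow_in_weyl_sub: "yh_pow h n \<in> weyl_sub h"
  by (induction n) (simp_all add: yh_pow_def weyl_sub.one weyl_sub.mult[OF weyl_sub.gen_y])

lemma yh_pow_degree_lead_coeff:
  assumes "h \<noteq> 0"
  shows "degree (yh_pow h n) = n \<and> lead_coeff (yh_pow h n) = h ^ n"
proof (induction n)
  case (Suc n)
  let ?Y = "[:pderiv h, h:]"
  have IH: "degree (yh_pow h n) = n" "coeff (yh_pow h n) n = h ^ n"
    using Suc.IH by metis+
  have Y: "degree ?Y = 1" "lead_coeff ?Y = h"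
    using assms by auto
  have eq: "yh_pow h (Suc n) = weyl_mult ?Y (yh_pow h n)"
    by (simp add: yh_pow_def weyl_y_h_eq)
  have top: "coeff (yh_pow h (Suc n)) (Suc n) = h ^ Suc n"
    using coeff_weyl_mult_top[of ?Y "yh_pow h n"] unfolding eq Y IH by simp
  moreover have "degree (yh_pow h (Suc n)) \<le> Suc n"
    using degree_weyl_mult_le[of ?Y "yh_pow h n"] unfolding eq Y IH by simp
  moreover have "h ^ Suc n \<noteq> 0"
    using assms by simp
  ultimately have "degree (yh_pow h (Suc n)) = Suc n"
    by (metis le_antisym le_degree)
  with top show ?case by simp
qed (simp add: yh_pow_def)

text \<open>An element whose \<open>j\<close>-th coefficient is divisible by \<open>h\<^sup>j\<close> is reduced
  to lower \<open>y\<close>-degree by subtracting \<open>r (yh)\<^sup>n\<close>, where \<open>h\<^sup>n r\<close> is its leading coefficient.\<close>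
lemma hpow_dvd_set_subset_weyl_sub:
  assumes h: "h \<noteq> 0"
  shows "hpow_dvd_set h 0 \<subseteq> weyl_sub h"
proof
  fix f assume "f \<in> hpow_dvd_set h 0"
  then show "f \<in> weyl_sub h"
  proof (induction "degree f" arbitrary: f rule: less_induct)
    case less
    define n where "n = degree f"
    obtain r where r: "lead_coeff f = h ^ n * r"
      using less.prems by (auto simp: hpow_dvd_set_def n_def elim: dvdE)
    define g where "g = weyl_mult [:r:] (yh_pow h n)"
    have g_in: "g \<in> weyl_sub h"
      unfolding g_def by (intro weyl_sub.mult weyl_sub_const yh_pow_in_weyl_sub)
    have g: "degree g \<le> n" "coeff g n = lead_coeff f"
      using yh_pow_degree_lead_coeff[OF h, of n] degree_smult_le[of r "yh_pow h n"] r
      by (auto simp: g_def weyl_mult_const_left mult.commute)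
    have "f - g \<in> weyl_sub h"
    proof (cases "f - g = 0")
      case False
      have "degree (f - g) \<le> n"
        using g degree_diff_le[of f n g] by (simp add: n_def)
      moreover have "coeff (f - g) n = 0"
        using g by (simp add: n_def)
      ultimately have "degree (f - g) < degree f"
        using False by (metis le_neq_implies_less leading_coeff_0_iff n_def)
      moreover have "f - g \<in> hpow_dvd_set h 0"
        using hpow_dvd_set_diff[OF less.prems subsetD[OF weyl_sub_subset_hpow_dvd_set g_in]] .
      ultimately show ?thesis using less.hyps by blast
    qed simp
    then have "(f - g) + g \<in> weyl_sub h"
      using g_in by (rule weyl_sub.add)
    then show "f \<in> weyl_sub h"
      by simp
  qed
qed

lemma weyl_sub_eq_hpow_dvd_set: "h \<noteq> 0 \<Longrightarrow> weyl_sub h = hpow_dvd_set h 0"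
  by (intro subset_antisym weyl_sub_subset_hpow_dvd_set hpow_dvd_set_subset_weyl_sub)

lemma weyl_sub_eq_UNIV: "degree h = 0 \<Longrightarrow> h \<noteq> 0 \<Longrightarrow> weyl_sub h = UNIV"
  by (simp add: weyl_sub_eq_hpow_dvd_set hpow_dvd_set_eq_UNIV)

lemma weyl_y_notin_weyl_sub:
  fixes h :: "'a::field poly"
  assumes "degree h > 0"
  shows "weyl_y \<notin> weyl_sub h"
proof -
  have "weyl_y = (monom 1 1 :: 'a poly poly)"
    by (rule poly_eqI) (simp add: weyl_y_def coeff_monom coeff_pCons split: nat.split)
  then have "weyl_y \<notin> hpow_dvd_set h 0"
    using monom_one_in_hpow_dvd_set_iff[OF assms, of 1 0] by simp
  then show ?thesis
    using weyl_sub_subset_hpow_dvd_set by blast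
qed

section \<open>Stabilization of antitone sequences\<close>

lemma antimono_stabilizes:
  fixes g :: "nat \<Rightarrow> 'w::wellorder"
  assumes "\<And>m. g (Suc m) \<le> g m"
  shows "\<exists>m0. \<forall>m\<ge>m0. g m = g m0"
proof -
  have "(LEAST v. v \<in> range g) \<in> range g"
    by (rule LeastI[of _ "g 0"]) simp
  then obtain m0 where m0: "g m0 = (LEAST v. v \<in> range g)"
    by auto
  have "g m = g m0" if "m0 \<le> m" for m
  proof (rule antisym)
    show "g m \<le> g m0"
      using lift_Suc_antimono_le[of g, OF assms that] .
    show "g m0 \<le> g m"
      unfolding m0 by (rule Least_le) simp
  qed
  then show ?thesis by blast
qed

text \<open>The minimum of \<open>d\<close> is attained at some \<open>(m\<^sub>1, n\<^sub>1)\<close>, which settles all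
  \<open>n \<ge> n\<^sub>1\<close> at once; the finitely many \<open>n < n\<^sub>1\<close> stabilize separately.\<close>
lemma antimono2_stabilizes_uniformly:
  fixes d :: "nat \<Rightarrow> nat \<Rightarrow> 'w::wellorder"
  assumes m: "\<And>m n. d (Suc m) n \<le> d m n" and n: "\<And>m n. d m (Suc n) \<le> d m n"
  shows "\<exists>m0. \<forall>m\<ge>m0. \<forall>n. d m n = d m0 n"
proof -
  let ?D = "range (case_prod d)"
  have "(LEAST v. v \<in> ?D) \<in> ?D"
    by (rule LeastI[of _ "d 0 0"]) auto
  then obtain m1 n1 where m1n1: "d m1 n1 = (LEAST v. v \<in> ?D)"
    by auto
  have min: "d m1 n1 \<le> d m n" for m n
    unfolding m1n1 by (rule Least_le) auto
  have anti: "d m' n' \<le> d m n" if "m \<le> m'" "n \<le> n'" for m n m' n'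
    using lift_Suc_antimono_le[of "d m'", OF n that(2)] lift_Suc_antimono_le[of "\<lambda>m. d m n", OF m that(1)]
    by simp
  have "\<forall>n. \<exists>s. \<forall>m\<ge>s. d m n = d s n"
    using antimono_stabilizes[of "\<lambda>m. d m _", OF m] by blast
  from choice[OF this] obtain s where "\<forall>n. \<forall>m\<ge>s n. d m n = d (s n) n" ..
  then have s: "d m n = d (s n) n" if "s n \<le> m" for n m
    using that by blast
  define m0 where "m0 = m1 + (\<Sum>n<n1. s n)"
  have "d m n = d m0 n" if "m0 \<le> m" for m n
  proof (cases "n < n1")
    case True
    then have "s n \<le> m0"
      using member_le_sum[of n "{..<n1}" s] by (simp add: m0_def)
    then show ?thesis using s[of n m] s[of n m0] that by simp
  next
    case False
    then have "d m n = d m1 n1" "d m0 n = d m1 n1"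
      using that anti[of m1 m n1 n] anti[of m1 m0 n1 n] min[of m n] min[of m0 n]
      by (simp_all add: m0_def)
    then show ?thesis by simp
  qed
  then show ?thesis by blast
qed

section \<open>Minimal degrees of leading coefficients\<close>

text \<open>The value is \<open>\<infinity>\<close> when \<open>M\<close> has no nonzero element of degree \<open>n\<close>.\<close>
definition min_lead_degree :: "'a::field poly poly set \<Rightarrow> nat \<Rightarrow> enat" where
  "min_lead_degree M n = (INF f \<in> {f \<in> M. f \<noteq> 0 \<and> degree f = n}. enat (degree (lead_coeff f)))"

lemma min_lead_degree_le:
  "f \<in> M \<Longrightarrow> f \<noteq> 0 \<Longrightarrow> min_lead_degree M (degree f) \<le> enat (degree (lead_coeff f))"
  unfolding min_lead_degree_def by (rule INF_lower) simp

lemma min_lead_degree_attained: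
  assumes "min_lead_degree M n = enat e"
  obtains f where "f \<in> M" "f \<noteq> 0" "degree f = n" "degree (lead_coeff f) = e"
proof -
  let ?A = "(\<lambda>f. enat (degree (lead_coeff f))) ` {f \<in> M. f \<noteq> 0 \<and> degree f = n}"
  have "?A \<noteq> {}"
  proof
    assume "?A = {}"
    then have empty: "{f \<in> M. f \<noteq> 0 \<and> degree f = n} = {}"
      by blast
    have "min_lead_degree M n = \<infinity>"
      unfolding min_lead_degree_def empty by (simp add: top_enat_def)
    with assms show False by simp
  qed
  then have "Inf ?A \<in> ?A"
    unfolding Inf_enat_def by (auto intro: LeastI)
  then show ?thesis
    using assms that by (auto simp: min_lead_degree_def)
qed

lemma min_lead_degree_antimono: "M \<subseteq> M' \<Longrightarrow> min_lead_degree M' n \<le> min_lead_degree M n"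
  unfolding min_lead_degree_def by (rule INF_superset_mono) auto

section \<open>Right and left module structures at once\<close>

text \<open>\<open>mul\<close> stands for the product of \<open>A\<^sub>1\<close> or for that of its opposite ring, so that
  statements about right modules over \<open>mul\<close> cover both sides.\<close>
locale weyl_product =
  fixes mul :: "'a::field poly poly \<Rightarrow> 'a poly poly \<Rightarrow> 'a poly poly"
  assumes mul_assoc: "mul (mul f g) u = mul f (mul g u)"
    and mul_add_left: "mul (f + g) u = mul f u + mul g u"
    and mul_add_right: "mul f (g + u) = mul f g + mul f u"
    and mul_one_left [simp]: "mul 1 f = f"
    and mul_one_right [simp]: "mul f 1 = f"
    and degree_mul_le: "degree (mul f g) \<le> degree f + degree g"
    and coeff_mul_top: "coeff (mul f g) (degree f + degree g) = lead_coeff f * lead_coeff g"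
    and mul_hpow_dvd_set:
      "f \<in> hpow_dvd_set h a \<Longrightarrow> g \<in> hpow_dvd_set h b \<Longrightarrow> mul f g \<in> hpow_dvd_set h (a + b)"
begin

definition submodule :: "'a poly \<Rightarrow> 'a poly poly set \<Rightarrow> bool" where
  "submodule h N \<longleftrightarrow> 0 \<in> N \<and> (\<forall>a\<in>N. \<forall>b\<in>N. a + b \<in> N) \<and> (\<forall>m\<in>N. \<forall>s\<in>weyl_sub h. mul m s \<in> N)"

definition noetherian :: "'a poly \<Rightarrow> bool" where
  "noetherian h \<longleftrightarrow>
     (\<forall>N :: nat \<Rightarrow> 'a poly poly set. (\<forall>n. submodule h (N n)) \<and> (\<forall>n. N n \<subseteq> N (Suc n))
        \<longrightarrow> (\<exists>n0. \<forall>n\<ge>n0. N n = N n0))"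

definition free :: "'a poly \<Rightarrow> bool" where
  "free h \<longleftrightarrow> (\<exists>B :: 'a poly poly set.
     (\<forall>m. \<exists>F c. finite F \<and> F \<subseteq> B \<and> (\<forall>b\<in>F. c b \<in> weyl_sub h)
              \<and> m = (\<Sum>b\<in>F. mul b (c b))) \<and>
     (\<forall>F c. finite F \<and> F \<subseteq> B \<and> (\<forall>b\<in>F. c b \<in> weyl_sub h)
              \<and> (\<Sum>b\<in>F. mul b (c b)) = 0 \<longrightarrow> (\<forall>b\<in>F. c b = 0)))"

definition one_sided_ideal :: "'a poly poly set \<Rightarrow> bool" where
  "one_sided_ideal M \<longleftrightarrow> 0 \<in> M \<and> (\<forall>a\<in>M. \<forall>b\<in>M. a + b \<in> M) \<and> (\<forall>a\<in>M. \<forall>s. mul a s \<in> M)"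

lemma mul_0_right [simp]: "mul f 0 = 0"
  using mul_add_right[of f 0 0] by (metis add_cancel_left_right add.right_neutral)

lemma mul_0_left [simp]: "mul 0 f = 0"
  using mul_add_left[of 0 0 f] by (metis add_cancel_left_right add.right_neutral)

lemma mul_diff_right: "mul f (g - u) = mul f g - mul f u"
  using mul_add_right[of f "g - u" u] by (simp add: algebra_simps)

lemma mul_sum_left: "mul (\<Sum>x\<in>A. f x) g = (\<Sum>x\<in>A. mul (f x) g)"
  by (induction A rule: infinite_finite_induct) (simp_all add: mul_add_left)

lemma degree_mul:
  assumes "f \<noteq> 0" "g \<noteq> 0"
  shows "degree (mul f g) = degree f + degree g"
  using assms degree_mul_le[of f g] coeff_mul_top[of f g]
  by (metis le_antisym le_degree leading_coeff_0_iff mult_eq_0_iff)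

lemma mul_eq_0_iff: "mul f g = 0 \<longleftrightarrow> f = 0 \<or> g = 0"
  using coeff_mul_top[of f g] by auto

lemma mul_weyl_sub: "h \<noteq> 0 \<Longrightarrow> a \<in> weyl_sub h \<Longrightarrow> s \<in> weyl_sub h \<Longrightarrow> mul a s \<in> weyl_sub h"
  using mul_hpow_dvd_set[of a h 0 s 0] by (simp add: weyl_sub_eq_hpow_dvd_set)

lemma mul_const_right:
  "degree (mul f [:q:]) \<le> degree f" "coeff (mul f [:q:]) (degree f) = lead_coeff f * q"
  using degree_mul_le[of f "[:q:]"] coeff_mul_top[of f "[:q:]"] by simp_all

lemma min_lead_degree_Suc_le:
  assumes "one_sided_ideal M"
  shows "min_lead_degree M (Suc n) \<le> min_lead_degree M n"
proof (cases "min_lead_degree M n")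
  case (enat e)
  then obtain f where f: "f \<in> M" "f \<noteq> 0" "degree f = n" "degree (lead_coeff f) = e"
    by (rule min_lead_degree_attained)
  let ?g = "mul f weyl_y"
  have y: "degree weyl_y = 1" "coeff weyl_y 1 = 1"
    by (simp_all add: weyl_y_def)
  have top: "coeff ?g (Suc n) = lead_coeff f"
    using coeff_mul_top[of f weyl_y] unfolding y f(3) by simp
  have "degree ?g \<le> Suc n"
    using degree_mul_le[of f weyl_y] unfolding y f(3) by simp
  moreover have "coeff ?g (Suc n) \<noteq> 0"
    using top f(2) by simp
  ultimately have "degree ?g = Suc n"
    by (simp add: le_antisym le_degree)
  moreover have "?g \<in> M" "?g \<noteq> 0"
    using assms f(1,2) by (auto simp: one_sided_ideal_def mul_eq_0_iff weyl_y_def)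
  ultimately show ?thesis
    using min_lead_degree_le[of ?g M] top enat f by simp
qed simp

text \<open>Division with remainder of leading coefficients, by an element of \<open>M\<close> of the same degree
  whose leading coefficient has minimal degree.\<close>
lemma reduce_by_min_lead_degree:
  assumes M': "one_sided_ideal M'" and "M \<subseteq> M'"
    and eq: "\<And>n. min_lead_degree M n = min_lead_degree M' n"
    and f: "f \<in> M'" "f \<noteq> 0"
  obtains g q where "g \<in> M" "f + mul g [:q:] \<in> M'"
    "f + mul g [:q:] = 0 \<or> degree (f + mul g [:q:]) < degree f"
proof -
  define n where "n = degree f"
  obtain e where e: "min_lead_degree M n = enat e"
    using min_lead_degree_le[OF f] eq[of n] by (cases "min_lead_degree M n") (auto simp: n_def)
  then obtain g where g: "g \<in> M" "g \<noteq> 0" "degree g = n" "degree (lead_coeff g) = e"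
    by (rule min_lead_degree_attained)
  define c where "c = lead_coeff g"
  define r where "r = lead_coeff f mod c"
  define f' where "f' = f + mul g [:- (lead_coeff f div c):]"
  have "c \<noteq> 0"
    using g(2) by (simp add: c_def)
  have f'_in: "f' \<in> M'"
    using M' f(1) g(1) \<open>M \<subseteq> M'\<close> by (auto simp: one_sided_ideal_def f'_def)
  have deg_f': "degree f' \<le> n"
    using mul_const_right(1)[of g] g(3) by (auto simp: f'_def n_def intro: degree_add_le)
  have coeff_f': "coeff f' n = r"
    using mul_const_right(2)[of g] div_mult_mod_eq[of "lead_coeff f" c]
    by (simp add: f'_def n_def g(3)[symmetric, unfolded n_def] c_def r_def algebra_simps)
  have "r = 0"
  proof (rule ccontr)
    assume "r \<noteq> 0"
    then have "degree f' = n" "f' \<noteq> 0"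
      using deg_f' coeff_f' by (auto intro: le_antisym le_degree)
    then have "enat e \<le> enat (degree r)"
      using min_lead_degree_le[OF f'_in] e eq[of n] coeff_f' by simp
    moreover have "degree r < e"
      using degree_mod_less'[OF \<open>c \<noteq> 0\<close> \<open>r \<noteq> 0\<close>[unfolded r_def]] g(4) by (simp add: r_def c_def)
    ultimately show False
      by simp
  qed
  then have "f' = 0 \<or> degree f' < degree f"
    using deg_f' coeff_f' by (metis le_neq_implies_less leading_coeff_0_iff n_def)
  then show ?thesis
    using that g(1) f'_in by (simp add: f'_def)
qed

lemma one_sided_ideal_subset_if_min_lead_degree_eq:
  assumes M: "one_sided_ideal M" and M': "one_sided_ideal M'"
    and "M \<subseteq> M'" and eq: "\<And>n. min_lead_degree M n = min_lead_degree M' n"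
  shows "M' \<subseteq> M"
proof
  fix f assume "f \<in> M'"
  then show "f \<in> M"
  proof (induction "degree f" arbitrary: f rule: less_induct)
    case less
    show ?case
    proof (cases "f = 0")
      case True
      then show ?thesis
        using M by (simp add: one_sided_ideal_def)
    next
      case False
      then obtain g q where g: "g \<in> M" and f': "f + mul g [:q:] \<in> M'"
        "f + mul g [:q:] = 0 \<or> degree (f + mul g [:q:]) < degree f"
        using reduce_by_min_lead_degree[OF M' \<open>M \<subseteq> M'\<close> eq less.prems] by blast
      have "f + mul g [:q:] \<in> M"
        using f' less.hyps M by (auto simp: one_sided_ideal_def)
      then have "(f + mul g [:q:]) + mul g [:-q:] \<in> M"
        using M g by (simp add: one_sided_ideal_def)
      moreover have "mul g [:q:] + mul g [:-q:] = 0"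
        using mul_add_right[of g "[:q:]" "[:-q:]"] by simp
      ultimately show ?thesis
        by (simp add: add.assoc)
    qed
  qed
qed

lemma one_sided_ideal_chain_stabilizes:
  assumes ideal: "\<And>n. one_sided_ideal (N n)" and chain: "\<And>n. N n \<subseteq> N (Suc n)"
  shows "\<exists>n0. \<forall>n\<ge>n0. N n = N n0"
proof -
  obtain m0 where m0: "\<And>m n. m \<ge> m0 \<Longrightarrow> min_lead_degree (N m) n = min_lead_degree (N m0) n"
    using antimono2_stabilizes_uniformly[of "\<lambda>m. min_lead_degree (N m)"]
      min_lead_degree_antimono[OF chain] min_lead_degree_Suc_le[OF ideal] by metis
  have "N m = N m0" if "m \<ge> m0" for m
  proof
    show "N m0 \<subseteq> N m"
      using lift_Suc_mono_le[of N, OF chain that] .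
    then show "N m \<subseteq> N m0"
      using one_sided_ideal_subset_if_min_lead_degree_eq[OF ideal ideal] m0[OF that] by metis
  qed
  then show ?thesis by blast
qed

lemma noetherian_if_unit:
  assumes "degree h = 0" "h \<noteq> 0"
  shows "noetherian h"
proof -
  have "submodule h N \<longleftrightarrow> one_sided_ideal N" for N
    using assms by (simp add: submodule_def one_sided_ideal_def weyl_sub_eq_UNIV)
  then show ?thesis
    unfolding noetherian_def using one_sided_ideal_chain_stabilizes by blast
qed

lemma submodule_hpow_dvd_set: "submodule h (hpow_dvd_set h a)"
  unfolding submodule_def
  using hpow_dvd_set_add mul_hpow_dvd_set[of _ h a _ 0] weyl_sub_subset_hpow_dvd_set by fastforce

lemma not_noetherian:
  assumes "degree h > 0"
  shows "\<not> noetherian h"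
proof
  assume "noetherian h"
  then have "\<exists>n0. \<forall>n\<ge>n0. hpow_dvd_set h (int n) = hpow_dvd_set h (int n0)"
    unfolding noetherian_def
    by (elim allE[of _ "\<lambda>n. hpow_dvd_set h (int n)"]) (simp add: submodule_hpow_dvd_set hpow_dvd_set_mono)
  then obtain n0 where "hpow_dvd_set h (int (Suc n0)) = hpow_dvd_set h (int n0)"
    using le_SucI by blast
  moreover have "monom 1 (Suc n0) \<in> hpow_dvd_set h (int (Suc n0))"
    using monom_one_in_hpow_dvd_set_iff[OF assms] by blast
  moreover have "monom 1 (Suc n0) \<notin> hpow_dvd_set h (int n0)"
    using monom_one_in_hpow_dvd_set_iff[OF assms] by simp
  ultimately show False
    by simp
qed

lemma free_if_unit:
  assumes "degree h = 0" "h \<noteq> 0"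
  shows "free h"
  unfolding free_def
proof (rule exI[of _ "{1}"], intro conjI allI impI)
  fix m
  show "\<exists>F c. finite F \<and> F \<subseteq> {1} \<and> (\<forall>b\<in>F. c b \<in> weyl_sub h) \<and> m = (\<Sum>b\<in>F. mul b (c b))"
    using assms by (intro exI[of _ "{1}"] exI[of _ "\<lambda>_. m"]) (simp add: weyl_sub_eq_UNIV)
next
  fix F c
  assume "finite F \<and> F \<subseteq> {1} \<and> (\<forall>b\<in>F. c b \<in> weyl_sub h) \<and> (\<Sum>b\<in>F. mul b (c b)) = 0"
  then show "\<forall>b\<in>F. c b = 0"
    by (cases "F = {}") (auto dest!: subset_singletonD)
qed

lemma lin_comb_unique:
  assumes indep: "\<forall>F c. finite F \<and> F \<subseteq> B \<and> (\<forall>b\<in>F. c b \<in> weyl_sub h)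
              \<and> (\<Sum>b\<in>F. mul b (c b)) = 0 \<longrightarrow> (\<forall>b\<in>F. c b = 0)"
    and F: "finite F" "F \<subseteq> B" "\<forall>b\<in>F. c b \<in> weyl_sub h"
    and G: "finite G" "G \<subseteq> B" "\<forall>b\<in>G. d b \<in> weyl_sub h"
    and eq: "(\<Sum>b\<in>F. mul b (c b)) = (\<Sum>b\<in>G. mul b (d b))"
    and b: "b \<in> F \<union> G"
  shows "(if b \<in> F then c b else 0) = (if b \<in> G then d b else 0)"
proof -
  define e where "e b = (if b \<in> F then c b else 0) - (if b \<in> G then d b else 0)" for b
  have "(\<Sum>b\<in>F \<union> G. mul b (if b \<in> F then c b else 0)) = (\<Sum>b\<in>F. mul b (c b))"
    using F G by (intro sum.mono_neutral_cong_right) auto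
  moreover have "(\<Sum>b\<in>F \<union> G. mul b (if b \<in> G then d b else 0)) = (\<Sum>b\<in>G. mul b (d b))"
    using F G by (intro sum.mono_neutral_cong_right) auto
  ultimately have "(\<Sum>b\<in>F \<union> G. mul b (e b)) = 0"
    by (simp add: e_def mul_diff_right sum_subtractf eq)
  moreover have "\<forall>b\<in>F \<union> G. e b \<in> weyl_sub h"
    unfolding e_def by (intro ballI weyl_sub_diff) (use F G in auto)
  ultimately have "e b = 0"
    using indep F G b by blast
  then show ?thesis by (simp add: e_def)
qed

text \<open>Expanding the nonzero element \<open>t = b h ^ degree b\<close> of \<open>A\<^sub>h\<close> as \<open>1 t\<close> along the
  basis shows that \<open>b\<close> alone occurs in the expansion of \<open>1\<close>, so \<open>b\<close> is a unit.\<close>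
lemma basis_element_degree_0:
  assumes h: "h \<noteq> 0"
    and indep: "\<forall>F c. finite F \<and> F \<subseteq> B \<and> (\<forall>b\<in>F. c b \<in> weyl_sub h)
              \<and> (\<Sum>b\<in>F. mul b (c b)) = 0 \<longrightarrow> (\<forall>b\<in>F. c b = 0)"
    and F0: "finite F0" "F0 \<subseteq> B" "\<forall>b\<in>F0. c0 b \<in> weyl_sub h"
    and one: "1 = (\<Sum>b\<in>F0. mul b (c0 b))"
    and b: "b \<in> B"
  shows "degree b = 0"
proof -
  have "b \<noteq> 0"
  proof
    assume "b = 0"
    then show False
      using spec[OF spec[OF indep, of "{0}"], of "\<lambda>_. 1"] b weyl_sub.one[of h] by simp
  qed
  define q where "q = [:h ^ degree b:]"
  define t where "t = mul b q"
  have q: "q \<in> weyl_sub h" "q \<noteq> 0"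
    using h by (simp_all add: q_def)
  have "t \<in> hpow_dvd_set h (int (degree b) + - int (degree b))"
    unfolding t_def q_def by (intro mul_hpow_dvd_set in_hpow_dvd_set_degree const_hpow_in_hpow_dvd_set)
  then have t: "t \<in> weyl_sub h" "t \<noteq> 0"
    using h q \<open>b \<noteq> 0\<close> by (simp_all add: t_def weyl_sub_eq_hpow_dvd_set mul_eq_0_iff)
  have eq: "(\<Sum>b'\<in>F0. mul b' (mul (c0 b') t)) = (\<Sum>b'\<in>{b}. mul b' ((\<lambda>_. q) b'))"
    by (simp add: mul_assoc[symmetric] mul_sum_left[symmetric] one[symmetric] t_def)
  have "\<forall>b'\<in>F0. mul (c0 b') t \<in> weyl_sub h"
    using F0(3) t(1) h by (simp add: mul_weyl_sub)
  moreover have "finite {b}" "{b} \<subseteq> B" "\<forall>b'\<in>{b}. (\<lambda>_. q) b' \<in> weyl_sub h"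
    using b q(1) by simp_all
  ultimately have coeffs: "(if b' \<in> F0 then mul (c0 b') t else 0) = (if b' \<in> {b} then q else 0)"
    if "b' \<in> F0 \<union> {b}" for b'
    using lin_comb_unique[OF indep F0(1,2) _ _ _ _ eq that] by simp
  have "b \<in> F0"
    using coeffs[of b] q(2) by (cases "b \<in> F0") auto
  have others: "c0 b' = 0" if "b' \<in> F0" "b' \<noteq> b" for b'
    using coeffs[of b'] that t(2) by (simp add: mul_eq_0_iff)
  have unit: "1 = mul b (c0 b)"
    using one sum.remove[OF F0(1) \<open>b \<in> F0\<close>, of "\<lambda>b'. mul b' (c0 b')"] others by simp
  then have "c0 b \<noteq> 0"
    by auto
  then have "degree b + degree (c0 b) = 0"
    using degree_mul[OF \<open>b \<noteq> 0\<close> \<open>c0 b \<noteq> 0\<close>] unit[symmetric] by simp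
  then show ?thesis
    by simp
qed

lemma not_free:
  assumes "degree h > 0"
  shows "\<not> free h"
proof
  assume "free h"
  then obtain B where
    span: "\<forall>m. \<exists>F c. finite F \<and> F \<subseteq> B \<and> (\<forall>b\<in>F. c b \<in> weyl_sub h) \<and> m = (\<Sum>b\<in>F. mul b (c b))"
    and indep: "\<forall>F c. finite F \<and> F \<subseteq> B \<and> (\<forall>b\<in>F. c b \<in> weyl_sub h)
              \<and> (\<Sum>b\<in>F. mul b (c b)) = 0 \<longrightarrow> (\<forall>b\<in>F. c b = 0)"
    unfolding free_def by blast
  have h: "h \<noteq> 0"
    using assms by auto
  obtain F0 c0 where F0: "finite F0" "F0 \<subseteq> B" "\<forall>b\<in>F0. c0 b \<in> weyl_sub h"
    and one: "1 = (\<Sum>b\<in>F0. mul b (c0 b))"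
    using span[THEN spec, of 1] by blast
  have B: "b \<in> weyl_sub h" if "b \<in> B" for b
  proof -
    have "degree b = 0"
      by (rule basis_element_degree_0[OF h indep F0 one that])
    then obtain a where "b = [:a:]"
      by (rule degree_eq_zeroE)
    then show ?thesis
      by simp
  qed
  obtain G d where G: "finite G" "G \<subseteq> B" "\<forall>b\<in>G. d b \<in> weyl_sub h"
    and y: "weyl_y = (\<Sum>b\<in>G. mul b (d b))"
    using span[THEN spec, of weyl_y] by blast
  have "mul b (d b) \<in> weyl_sub h" if "b \<in> G" for b
    using mul_weyl_sub[OF h B] G that by blast
  then have "weyl_y \<in> weyl_sub h"
    unfolding y by (rule weyl_sub_sum)
  then show False
    using weyl_y_notin_weyl_sub[OF assms] by simp
qed

end

lemma weyl_product_weyl_mult: "weyl_product weyl_mult"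
  by unfold_locales (simp_all add: weyl_mult_assoc weyl_mult_add_left weyl_mult_add_right
      degree_weyl_mult_le coeff_weyl_mult_top weyl_mult_hpow_dvd_set)

lemma weyl_product_weyl_mult_opposite: "weyl_product (\<lambda>f g. weyl_mult g f)"
proof unfold_locales
  show "degree (weyl_mult g f) \<le> degree f + degree g" for f g :: "'a poly poly"
    using degree_weyl_mult_le[of g f] by simp
  show "coeff (weyl_mult g f) (degree f + degree g) = lead_coeff f * lead_coeff g" for f g :: "'a poly poly"
    using coeff_weyl_mult_top[of g f] by (simp add: add.commute mult.commute)
  show "weyl_mult g f \<in> hpow_dvd_set h (a + b)"
    if "f \<in> hpow_dvd_set h a" "g \<in> hpow_dvd_set h b" for f g :: "'a poly poly" and h a b
    using weyl_mult_hpow_dvd_set[OF that(2,1)] by (simp add: add.commute)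
qed (simp_all add: weyl_mult_assoc weyl_mult_add_left weyl_mult_add_right)

interpretation right: weyl_product weyl_mult
  rewrites "weyl_product.noetherian weyl_mult = noetherian_right"
    and "weyl_product.free weyl_mult = free_right"
proof -
  have submodule: "weyl_product.submodule weyl_mult h N = right_submodule h N" for h N
    by (simp add: weyl_product.submodule_def[OF weyl_product_weyl_mult] right_submodule_def)
  show "weyl_product.noetherian weyl_mult = noetherian_right"
    by (intro ext) (simp add: weyl_product.noetherian_def[OF weyl_product_weyl_mult] noetherian_right_def submodule)
  show "weyl_product.free weyl_mult = free_right"
    by (intro ext) (simp add: weyl_product.free_def[OF weyl_product_weyl_mult] free_right_def)
qed (rule weyl_product_weyl_mult)

interpretation left: weyl_product "\<lambda>f g. weyl_mult g f"
  rewrites "weyl_product.noetherian (\<lambda>f g. weyl_mult g f) = noetherian_left"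
    and "weyl_product.free (\<lambda>f g. weyl_mult g f) = free_left"
proof -
  have submodule: "weyl_product.submodule (\<lambda>f g. weyl_mult g f) h N = left_submodule h N" for h N
    by (simp add: weyl_product.submodule_def[OF weyl_product_weyl_mult_opposite] left_submodule_def)
  show "weyl_product.noetherian (\<lambda>f g. weyl_mult g f) = noetherian_left"
    by (intro ext) (simp add: weyl_product.noetherian_def[OF weyl_product_weyl_mult_opposite] noetherian_left_def submodule)
  show "weyl_product.free (\<lambda>f g. weyl_mult g f) = free_left"
    by (intro ext) (simp add: weyl_product.free_def[OF weyl_product_weyl_mult_opposite] free_left_def)
qed (rule weyl_product_weyl_mult_opposite)

theorem corollary4p5:
  fixes h :: "'a::field poly"
  assumes "h \<noteq> 0"
  shows "((\<exists>c. c \<noteq> 0 \<and> h = [:c:]) \<longleftrightarrow> noetherian_right h)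
       \<and> ((\<exists>c. c \<noteq> 0 \<and> h = [:c:]) \<longleftrightarrow> free_right h)
       \<and> ((\<exists>c. c \<noteq> 0 \<and> h = [:c:]) \<longleftrightarrow> noetherian_left h)
       \<and> ((\<exists>c. c \<noteq> 0 \<and> h = [:c:]) \<longleftrightarrow> free_left h)"
proof -
  have const: "(\<exists>c. c \<noteq> 0 \<and> h = [:c:]) \<longleftrightarrow> degree h = 0"
    using assms by (metis degree_eq_zeroE degree_pCons_0 pCons_0_0)
  show ?thesis
  proof (cases "degree h = 0")
    case True
    have "noetherian_right h" "free_right h" "noetherian_left h" "free_left h"
      using right.noetherian_if_unit right.free_if_unit left.noetherian_if_unit left.free_if_unit
        True assms by blast+
    then show ?thesis
      unfolding const using True by simp
  next
    case False
    then have "degree h > 0"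
      by simp
    then have "\<not> noetherian_right h" "\<not> free_right h" "\<not> noetherian_left h" "\<not> free_left h"
      using right.not_noetherian right.not_free left.not_noetherian left.not_free by blast+
    then show ?thesis
      unfolding const using False by simp
  qed
qed

end
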